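(* Let $n\ge0$ be an integer and \[ I_{m,n}^{(2)}=\int_0^\pi \cos(2m\theta)\,\log\big(C_n^{(2)}(\cos\theta)\big)^2\,\mathrm{d}\theta . \] Then for every integer $m$ with $1\le m\le n+2$, \[ I_{m,n}^{(2)}=\frac{\pi}{m}\left[\,3-\left(\frac{n+3}{n+1}\right)^{m}\right]+\pi\,\frac{n+3}{n+1}\,\delta_{m,n+2}, \] where $\delta$ is the Kronecker delta.
   Context: $C_n^{(2)}(x)$ denotes the Gegenbauer polynomial of degree $n$ and parameter $2$, defined by $(1-2xt+t^2)^{-2}=\sum_{n\ge0}C_n^{(2)}(x)t^n$. *)

theory Defs
  imports "HOL-Analysis.Analysis" "HOL-Computational_Algebra.Formal_Power_Series"
begin

definition gegenbauer2 :: "nat \<Rightarrow> real \<Rightarrow> real" where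
  "gegenbauer2 n x =
     fps_nth (inverse ((1 - fps_const (2 * x) * fps_X + fps_X ^ 2) ^ 2 :: real fps)) n"

end

theory Submission
  imports Defs "HOL-Real_Asymp.Real_Asymp" "HOL-Computational_Algebra.Polynomial_FPS"
begin

text \<open>\<open>C_n^(2)(cos \<theta>)\<close> has \<open>n\<close> sign changes on the nodes \<open>k pi / (n + 2)\<close>, hence zeros
  \<open>z_1, ..., z_n\<close> in \<open>(0, pi)\<close>, and \<open>ln (C_n^(2)(cos \<theta>)^2) = ln c^2 + \<Sum>\<^sub>j ln ((cos \<theta> - cos z_j)^2)\<close>.
  Writing \<open>(cos \<theta> - cos z)^2\<close> as a product of two squared chords \<open>|1 - e^(i(\<theta> \<plusminus> z))|^2\<close>, whose
  logarithms have explicit primitives against \<open>cos (k \<theta>)\<close>, each term contributes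
  \<open>-2 pi cos (k z_j) / k\<close>. The power sums \<open>\<Sum>\<^sub>j cos (2 m z_j)\<close> are read off a generating function:
  with \<open>y = (t + 1/t) / 2\<close> the factorization becomes
  \<open>\<Prod>\<^sub>j (1 - 2 cos z_j t + t^2) = (n + 1)^-1 \<Sum>\<^sub>k (1 + ... + t^(2k)) (1 + ... + t^(2(n-k)))\<close>, and
  \<open>(1 - t^2)^3\<close> times the right-hand side is \<open>(n+1) - (n+3) t^2 + (n+3) t^(2n+4) - (n+1) t^(2n+6)\<close>.
  Its logarithmic derivative shows that the power sums grow geometrically with ratio
  \<open>(n + 3) / (n + 1)\<close> up to \<open>2 m = 2 n + 4\<close>, where the third term first contributes.\<close>

section \<open>Fourier coefficients of \<open>ln ((cos t - cos a)^2)\<close>\<close>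

text \<open>\<open>ln_chord t = ln |1 - e^(it)|^2\<close>.\<close>
definition ln_chord :: "real \<Rightarrow> real" where
  "ln_chord t = ln (2 - 2 * cos t)"

lemma ln_chord_eq_ln_sin_half: "ln_chord t = ln (4 * (sin (t / 2))\<^sup>2)"
  using cos_double_sin[of "t / 2"] by (simp add: ln_chord_def)

lemma ln_chord_minus [simp]: "ln_chord (- t) = ln_chord t"
  by (simp add: ln_chord_def)

lemma ln_chord_diff_2pi [simp]: "ln_chord (t - 2 * pi) = ln_chord t"
  by (simp add: ln_chord_def cos_diff)

lemma sin_nat_mult_diff_2pi [simp]: "sin (real j * (t - 2 * pi)) = sin (real j * t)"
  and cos_nat_mult_diff_2pi [simp]: "cos (real j * (t - 2 * pi)) = cos (real j * t)"
proof -
  have "real j * (t - 2 * pi) = real j * t - real (2 * j) * pi"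
    by (simp add: algebra_simps)
  then show "sin (real j * (t - 2 * pi)) = sin (real j * t)"
    and "cos (real j * (t - 2 * pi)) = cos (real j * t)"
    by (simp_all add: sin_diff cos_diff)
qed

lemma cos_ne_one:
  fixes u :: real
  assumes "\<bar>u\<bar> < 2 * pi" "u \<noteq> 0"
  shows "cos u \<noteq> 1"
proof -
  have "sin (u / 2) \<noteq> 0"
    using assms by (subst sin_zero_pi_iff) auto
  then show ?thesis
    using cos_double_sin[of "u / 2"] by simp
qed

lemma has_real_derivative_ln_chord:
  assumes "cos t \<noteq> 1"
  shows "(ln_chord has_real_derivative sin t / (1 - cos t)) (at t)"
proof -
  have "2 - 2 * cos t > 0"
    using assms cos_le_one[of t] by linarith
  then have "((\<lambda>t. ln (2 - 2 * cos t)) has_real_derivative 2 * sin t / (2 - 2 * cos t)) (at t)"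
    by (auto intro!: derivative_eq_intros)
  moreover have "2 * sin t / (2 - 2 * cos t) = sin t / (1 - cos t)"
    by (simp add: divide_simps)
  ultimately show ?thesis
    by (simp add: ln_chord_def[abs_def])
qed

lemma sin_mult_sin_telescope:
  fixes t :: real
  assumes "k \<ge> 1"
  shows "sin (real k * t) * sin t =
    (1 - cos t) * (1 + cos (real k * t) + 2 * (\<Sum>j=1..<k. cos (real j * t)))"
  using assms
proof (induction k rule: nat_induct_at_least)
  case base
  then show ?case
    by (simp add: sin_squared_eq power2_eq_square algebra_simps)
next
  case (Suc k)
  have "(\<Sum>j=1..<Suc k. cos (real j * t)) = (\<Sum>j=1..<k. cos (real j * t)) + cos (real k * t)"
    using Suc.hyps by simp
  moreover have "sin (real (Suc k) * t) = sin (real k * t) * cos t + cos (real k * t) * sin t"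
    and "cos (real (Suc k) * t) = cos (real k * t) * cos t - sin (real k * t) * sin t"
    by (simp_all add: distrib_right sin_add cos_add)
  ultimately show ?case
    using Suc.IH sin_cos_squared_add[of t] by (simp only:) algebra
qed

lemma one_minus_cos_mult_sin_telescope:
  fixes t :: real
  assumes "k \<ge> 1"
  shows "(1 - cos (real k * t)) * sin t =
    (1 - cos t) * (sin (real k * t) + 2 * (\<Sum>j=1..<k. sin (real j * t)))"
  using assms
proof (induction k rule: nat_induct_at_least)
  case base
  then show ?case
    by (simp add: algebra_simps)
next
  case (Suc k)
  have "(\<Sum>j=1..<Suc k. sin (real j * t)) = (\<Sum>j=1..<k. sin (real j * t)) + sin (real k * t)"
    using Suc.hyps by simp
  moreover have "sin (real (Suc k) * t) = sin (real k * t) * cos t + cos (real k * t) * sin t"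
    and "cos (real (Suc k) * t) = cos (real k * t) * cos t - sin (real k * t) * sin t"
    by (simp_all add: distrib_right sin_add cos_add)
  ultimately show ?case
    using Suc.IH sin_cos_squared_add[of t] by (simp only:) algebra
qed

lemma abs_sin_nat_mult_le: "\<bar>sin (real n * x)\<bar> \<le> real n * \<bar>sin x\<bar>"
proof (induction n)
  case 0
  then show ?case by simp
next
  case (Suc n)
  have "\<bar>sin (real (Suc n) * x)\<bar> = \<bar>sin (real n * x) * cos x + cos (real n * x) * sin x\<bar>"
    by (simp add: distrib_right sin_add algebra_simps)
  also have "\<dots> \<le> \<bar>sin (real n * x)\<bar> * \<bar>cos x\<bar> + \<bar>cos (real n * x)\<bar> * \<bar>sin x\<bar>"
    by (metis abs_mult abs_triangle_ineq)
  also have "\<dots> \<le> \<bar>sin (real n * x)\<bar> + \<bar>sin x\<bar>"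
    by (intro add_mono mult_left_le mult_left_le_one_le) (auto intro: abs_cos_le_one)
  finally show ?case
    using Suc.IH by (simp add: algebra_simps)
qed

lemma abs_sin_nat_mult_le_sin_half: "\<bar>sin (real k * t)\<bar> \<le> 2 * real k * \<bar>sin (t / 2)\<bar>"
  using abs_sin_nat_mult_le[of "2 * k" "t / 2"] by simp

lemma abs_one_minus_cos_nat_mult_le_sin_half:
  "\<bar>1 - cos (real k * t)\<bar> \<le> 2 * (real k)\<^sup>2 * \<bar>sin (t / 2)\<bar>"
proof -
  have "\<bar>sin (real k * (t / 2))\<bar>\<^sup>2 \<le> (real k * \<bar>sin (t / 2)\<bar>)\<^sup>2"
    by (intro power_mono abs_sin_nat_mult_le) simp
  also have "\<dots> = (real k)\<^sup>2 * \<bar>sin (t / 2)\<bar> * \<bar>sin (t / 2)\<bar>"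
    by (simp add: power2_eq_square)
  also have "\<dots> \<le> (real k)\<^sup>2 * \<bar>sin (t / 2)\<bar>"
    by (intro mult_left_le abs_sin_le_one) auto
  finally show ?thesis
    using cos_double_sin[of "real k * (t / 2)"] by simp
qed

text \<open>The logarithmic singularity of \<open>ln_chord\<close> disappears after multiplication by any
  continuous function of order \<open>O(sin (t/2))\<close>, because \<open>y ln (4 y^2) \<rightarrow> 0\<close>.\<close>
lemma isCont_mult_ln_chord:
  fixes h :: "real \<Rightarrow> real"
  assumes bound: "\<And>t. \<bar>h t\<bar> \<le> C * \<bar>sin (t / 2)\<bar>" and "isCont h t0"
  shows "isCont (\<lambda>t. h t * ln_chord t) t0"
proof (cases "cos t0 = 1")
  case False
  then show ?thesis
    using \<open>isCont h t0\<close> DERIV_isCont[OF has_real_derivative_ln_chord] by (intro continuous_intros)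
next
  case True
  then have sin0: "sin (t0 / 2) = 0"
    using cos_double_sin[of "t0 / 2"] by simp
  define W where "W t = sin (t / 2) * ln (4 * (sin (t / 2))\<^sup>2)" for t :: real
  have "((\<lambda>y::real. y * ln (4 * y\<^sup>2)) \<longlongrightarrow> 0) (at 0)"
    by real_asymp
  then have "isCont (\<lambda>y::real. y * ln (4 * y\<^sup>2)) (sin (t0 / 2))"
    using sin0 by (simp add: isCont_def)
  then have "isCont W t0"
    unfolding W_def by (rule isCont_o2[rotated]) (auto intro!: continuous_intros)
  moreover have "W t0 = 0"
    by (simp add: W_def sin0)
  ultimately have "(W \<longlongrightarrow> 0) (at t0)"
    unfolding isCont_def by simp
  then have lim: "((\<lambda>t. \<bar>C\<bar> * \<bar>W t\<bar>) \<longlongrightarrow> 0) (at t0)"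
    by (intro tendsto_mult_right_zero tendsto_rabs_zero)
  have le: "norm (h t * ln_chord t) \<le> \<bar>C\<bar> * \<bar>W t\<bar>" for t
  proof -
    have "norm (h t * ln_chord t) = \<bar>h t\<bar> * \<bar>ln (4 * (sin (t / 2))\<^sup>2)\<bar>"
      by (simp add: ln_chord_eq_ln_sin_half abs_mult)
    also have "\<dots> \<le> \<bar>C\<bar> * \<bar>sin (t / 2)\<bar> * \<bar>ln (4 * (sin (t / 2))\<^sup>2)\<bar>"
    proof (intro mult_right_mono)
      show "\<bar>h t\<bar> \<le> \<bar>C\<bar> * \<bar>sin (t / 2)\<bar>"
        using bound[of t] abs_ge_self[of C] by (meson abs_ge_zero mult_right_mono order_trans)
    qed simp
    finally show ?thesis
      by (simp add: W_def abs_mult mult.assoc)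
  qed
  have "h t0 * ln_chord t0 = 0"
    using True by (simp add: ln_chord_def)
  then show ?thesis
    unfolding isCont_def using Lim_null_comparison[OF always_eventually[OF allI[OF le]] lim]
    by (simp only:)
qed

text \<open>Primitives of \<open>cos (k t) ln_chord t\<close> and \<open>sin (k t) ln_chord t\<close>, found by integration by
  parts: the telescoping identities above express \<open>sin (k t)\<close> and \<open>1 - cos (k t)\<close> times
  \<open>ln_chord' t = sin t / (1 - cos t)\<close> as trigonometric polynomials.\<close>

definition cos_ln_chord_prim :: "nat \<Rightarrow> real \<Rightarrow> real" where
  "cos_ln_chord_prim k t =
     (sin (real k * t) * ln_chord t - t - sin (real k * t) / real k
      - 2 * (\<Sum>j=1..<k. sin (real j * t) / real j)) / real k"

definition sin_ln_chord_prim :: "nat \<Rightarrow> real \<Rightarrow> real" where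
  "sin_ln_chord_prim k t =
     ((1 - cos (real k * t)) * ln_chord t + cos (real k * t) / real k
      + 2 * (\<Sum>j=1..<k. cos (real j * t) / real j)) / real k"

lemma has_real_derivative_cos_ln_chord_prim:
  assumes "k \<ge> 1" "cos t \<noteq> 1"
  shows "(cos_ln_chord_prim k has_real_derivative cos (real k * t) * ln_chord t) (at t)"
proof -
  let ?P = "\<lambda>t. t + sin (real k * t) / real k + 2 * (\<Sum>j=1..<k. sin (real j * t) / real j)"
  have "(?P has_real_derivative 1 + cos (real k * t) + 2 * (\<Sum>j=1..<k. cos (real j * t))) (at t)"
    using assms(1) by (auto intro!: derivative_eq_intros sum.cong)
  also have "1 + cos (real k * t) + 2 * (\<Sum>j=1..<k. cos (real j * t)) =
      sin (real k * t) * (sin t / (1 - cos t))"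
    using sin_mult_sin_telescope[OF assms(1), of t] assms(2) by (simp add: field_simps)
  finally have P: "(?P has_real_derivative sin (real k * t) * (sin t / (1 - cos t))) (at t)" .
  have "((\<lambda>t. sin (real k * t) * ln_chord t) has_real_derivative
      cos (real k * t) * real k * ln_chord t + sin (real k * t) * (sin t / (1 - cos t))) (at t)"
    by (auto intro!: derivative_eq_intros has_real_derivative_ln_chord assms(2))
  from DERIV_cdivide[OF DERIV_diff[OF this P], of "real k"] show ?thesis
    using assms(1) by (simp add: cos_ln_chord_prim_def[abs_def] algebra_simps)
qed

lemma has_real_derivative_sin_ln_chord_prim:
  assumes "k \<ge> 1" "cos t \<noteq> 1"
  shows "(sin_ln_chord_prim k has_real_derivative sin (real k * t) * ln_chord t) (at t)"
proof -
  let ?P = "\<lambda>t. - cos (real k * t) / real k - 2 * (\<Sum>j=1..<k. cos (real j * t) / real j)"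
  have "(?P has_real_derivative sin (real k * t) + 2 * (\<Sum>j=1..<k. sin (real j * t))) (at t)"
    using assms(1) by (auto intro!: derivative_eq_intros sum.cong simp: sum_negf)
  also have "sin (real k * t) + 2 * (\<Sum>j=1..<k. sin (real j * t)) =
      (1 - cos (real k * t)) * (sin t / (1 - cos t))"
    using one_minus_cos_mult_sin_telescope[OF assms(1), of t] assms(2) by (simp add: field_simps)
  finally have P: "(?P has_real_derivative (1 - cos (real k * t)) * (sin t / (1 - cos t))) (at t)" .
  have "((\<lambda>t. (1 - cos (real k * t)) * ln_chord t) has_real_derivative
      sin (real k * t) * real k * ln_chord t + (1 - cos (real k * t)) * (sin t / (1 - cos t))) (at t)"
    by (auto intro!: derivative_eq_intros has_real_derivative_ln_chord assms(2))
  from DERIV_cdivide[OF DERIV_diff[OF this P], of "real k"] show ?thesis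
    using assms(1) by (simp add: sin_ln_chord_prim_def[abs_def] algebra_simps)
qed

lemma isCont_cos_ln_chord_prim: "isCont (cos_ln_chord_prim k) t"
proof -
  define F where "F t = sin (real k * t) * ln_chord t" for t
  have "isCont F t"
    unfolding F_def
    by (rule isCont_mult_ln_chord[OF abs_sin_nat_mult_le_sin_half]) (intro continuous_intros)
  moreover have "cos_ln_chord_prim k = (\<lambda>t. (F t - t - sin (real k * t) * inverse (real k)
      - 2 * (\<Sum>j=1..<k. sin (real j * t) * inverse (real j))) * inverse (real k))"
    by (simp add: fun_eq_iff cos_ln_chord_prim_def F_def divide_inverse)
  ultimately show ?thesis
    by (auto intro!: continuous_intros)
qed

lemma isCont_sin_ln_chord_prim: "isCont (sin_ln_chord_prim k) t"
proof -
  define F where "F t = (1 - cos (real k * t)) * ln_chord t" for t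
  have "isCont F t"
    unfolding F_def
    by (rule isCont_mult_ln_chord[OF abs_one_minus_cos_nat_mult_le_sin_half])
      (intro continuous_intros)
  moreover have "sin_ln_chord_prim k = (\<lambda>t. (F t + cos (real k * t) * inverse (real k)
      + 2 * (\<Sum>j=1..<k. cos (real j * t) * inverse (real j))) * inverse (real k))"
    by (simp add: fun_eq_iff sin_ln_chord_prim_def F_def divide_inverse)
  ultimately show ?thesis
    by (auto intro!: continuous_intros)
qed

lemma cos_ln_chord_prim_diff_2pi:
  "k \<ge> 1 \<Longrightarrow> cos_ln_chord_prim k (t - 2 * pi) = cos_ln_chord_prim k t + 2 * pi / real k"
  by (simp add: cos_ln_chord_prim_def) (simp add: field_simps)

lemma sin_ln_chord_prim_diff_2pi: "sin_ln_chord_prim k (t - 2 * pi) = sin_ln_chord_prim k t"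
  by (simp add: sin_ln_chord_prim_def)

lemma has_integral_cos_mult_ln_chord_shift:
  assumes "k \<ge> 1" "\<bar>a\<bar> \<le> pi"
  shows "((\<lambda>t. cos (real k * t) * ln_chord (t - a)) has_integral
           - 2 * pi * cos (real k * a) / real k) {-pi..pi}"
proof -
  define F where "F x = cos (real k * a) * cos_ln_chord_prim k (x - a)
                      - sin (real k * a) * sin_ln_chord_prim k (x - a)" for x
  have deriv: "(F has_real_derivative cos (real k * x) * ln_chord (x - a)) (at x)"
    if "cos (x - a) \<noteq> 1" for x
  proof -
    have shift: "((\<lambda>x. x - a) has_real_derivative 1) (at x)"
      by (auto intro!: derivative_eq_intros)
    have "(F has_real_derivative cos (real k * a) * (cos (real k * (x - a)) * ln_chord (x - a))
        - sin (real k * a) * (sin (real k * (x - a)) * ln_chord (x - a))) (at x)"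
      unfolding F_def[abs_def]
      using DERIV_chain2[OF has_real_derivative_cos_ln_chord_prim[OF assms(1) that] shift]
        DERIV_chain2[OF has_real_derivative_sin_ln_chord_prim[OF assms(1) that] shift]
      by (auto intro!: derivative_eq_intros)
    moreover have "cos (real k * x) = cos (real k * a) * cos (real k * (x - a))
        - sin (real k * a) * sin (real k * (x - a))"
      using cos_add[of "real k * a" "real k * (x - a)"] by (simp add: algebra_simps)
    ultimately show ?thesis
      by (simp only: left_diff_distrib mult.assoc)
  qed
  have "((\<lambda>t. cos (real k * t) * ln_chord (t - a)) has_integral F pi - F (- pi)) {-pi..pi}"
  proof (intro fundamental_theorem_of_calculus_interior_strong[where S="{a}"])
    show "continuous_on {-pi..pi} F"
      unfolding F_def
      by (intro continuous_at_imp_continuous_on ballI continuous_intros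
          isCont_o2[OF _ isCont_cos_ln_chord_prim] isCont_o2[OF _ isCont_sin_ln_chord_prim])
  next
    fix x assume "x \<in> {-pi<..<pi} - {a}"
    then have "cos (x - a) \<noteq> 1"
      using assms(2) by (intro cos_ne_one) auto
    then show "(F has_vector_derivative cos (real k * x) * ln_chord (x - a)) (at x)"
      using deriv by (simp add: has_real_derivative_iff_has_vector_derivative)
  qed auto
  \<comment> \<open>Only the linear term \<open>- t / k\<close> of \<open>cos_ln_chord_prim\<close> is not \<open>2 pi\<close>-periodic.\<close>
  moreover have "F (- pi) = F pi + 2 * pi * cos (real k * a) / real k"
    using cos_ln_chord_prim_diff_2pi[OF assms(1), of "pi - a"] sin_ln_chord_prim_diff_2pi[of k "pi - a"]
    by (simp add: F_def algebra_simps)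
  ultimately show ?thesis
    by simp
qed

lemma ln_sq_cos_diff_eq:
  assumes "cos (t - a) \<noteq> 1" "cos (t + a) \<noteq> 1"
  shows "ln ((cos t - cos a)\<^sup>2) = ln_chord (t - a) + ln_chord (t + a) - ln 4"
proof -
  have pos: "2 - 2 * cos (t - a) > 0" "2 - 2 * cos (t + a) > 0"
    using assms cos_le_one[of "t - a"] cos_le_one[of "t + a"] by linarith+
  have "(cos t - cos a)\<^sup>2 = (2 - 2 * cos (t - a)) * (2 - 2 * cos (t + a)) / 4"
    unfolding cos_diff cos_add power2_eq_square
    using sin_cos_squared_add[of t] sin_cos_squared_add[of a] by algebra
  then have "ln ((cos t - cos a)\<^sup>2) = ln ((2 - 2 * cos (t - a)) * (2 - 2 * cos (t + a)) / 4)"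
    by (simp only:)
  also have "\<dots> = ln_chord (t - a) + ln_chord (t + a) - ln 4"
    using pos by (simp add: ln_chord_def ln_mult ln_div)
  finally show ?thesis .
qed

lemma has_integral_cos_nat_mult_const:
  assumes "k \<ge> 1"
  shows "((\<lambda>t. cos (real k * t) * c) has_integral 0) {0..pi}"
proof -
  have "((\<lambda>t. cos (real k * t) * c) has_integral
      sin (real k * pi) / real k * c - sin (real k * 0) / real k * c) {0..pi}"
    using assms by (intro fundamental_theorem_of_calculus)
      (auto intro!: derivative_eq_intros simp: has_real_derivative_iff_has_vector_derivative[symmetric])
  then show ?thesis
    by simp
qed

text \<open>After the splitting \<open>ln_sq_cos_diff_eq\<close>, the reflection \<open>t \<mapsto> -t\<close> turns the
  \<open>t + a\<close> part on \<open>[0, pi]\<close> into the \<open>t - a\<close> part on \<open>[-pi, 0]\<close>.\<close>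
lemma has_integral_cos_mult_ln_sq_cos_diff:
  assumes "k \<ge> 1" "0 < a" "a < pi"
  shows "((\<lambda>t. cos (real k * t) * ln ((cos t - cos a)\<^sup>2)) has_integral
           - 2 * pi * cos (real k * a) / real k) {0..pi}"
proof -
  let ?f = "\<lambda>t. cos (real k * t) * ln_chord (t - a)"
  have full: "(?f has_integral - 2 * pi * cos (real k * a) / real k) {-pi..pi}"
    using assms by (intro has_integral_cos_mult_ln_chord_shift) auto
  then have "?f integrable_on {-pi..0}" "?f integrable_on {0..pi}"
    by (auto intro: integrable_subinterval_real)
  then obtain I1 I2 where I1: "(?f has_integral I1) {-pi..0}" and I2: "(?f has_integral I2) {0..pi}"
    by blast
  have sum: "I2 + I1 = - 2 * pi * cos (real k * a) / real k"
    using has_integral_unique[OF has_integral_combine[OF _ _ I1 I2] full] by simp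
  have reflected: "((\<lambda>t. cos (real k * t) * ln_chord (t + a)) has_integral I1) {0..pi}"
  proof -
    have "ln_chord (- t - a) = ln_chord (t + a)" for t
      using ln_chord_minus[of "t + a"] by simp
    then show ?thesis
      using has_integral_reflect_real[of ?f I1 0 "-pi", THEN iffD2, OF I1] by simp
  qed
  have "((\<lambda>t. ?f t + cos (real k * t) * ln_chord (t + a) - cos (real k * t) * ln 4)
      has_integral - 2 * pi * cos (real k * a) / real k) {0..pi}"
    using has_integral_diff[OF has_integral_add[OF I2 reflected]
        has_integral_cos_nat_mult_const[OF assms(1)]] sum
    by simp
  then show ?thesis
  proof (rule has_integral_spike_finite[where S="{a}", rotated -1])
    fix t assume "t \<in> {0..pi} - {a}"
    then have "cos (t - a) \<noteq> 1" and "cos (t + a) \<noteq> 1"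
      using assms by (intro cos_ne_one; auto)+
    then show "cos (real k * t) * ln ((cos t - cos a)\<^sup>2) =
        ?f t + cos (real k * t) * ln_chord (t + a) - cos (real k * t) * ln 4"
      by (simp add: ln_sq_cos_diff_eq algebra_simps)
  qed simp
qed

section \<open>The zeros of \<open>C_n^(2)\<close>\<close>

fun chebyshev_U :: "nat \<Rightarrow> real poly" where
  "chebyshev_U 0 = 1"
| "chebyshev_U (Suc 0) = [:0, 2:]"
| "chebyshev_U (Suc (Suc k)) = [:0, 2:] * chebyshev_U (Suc k) - chebyshev_U k"

lemma inverse_fps_chebyshev_U:
  "inverse (1 - fps_const (2 * x) * fps_X + fps_X ^ 2) = Abs_fps (\<lambda>k. poly (chebyshev_U k) x)"
proof (rule fps_inverse_unique)
  let ?U = "Abs_fps (\<lambda>k. poly (chebyshev_U k) x)"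
  have "(1 - fps_const (2 * x) * fps_X + fps_X ^ 2) * ?U =
      ?U - fps_const (2 * x) * (fps_X * ?U) + fps_X ^ 2 * ?U"
    by (simp add: algebra_simps)
  also have "\<dots> = 1"
  proof (rule fps_ext)
    fix k
    show "fps_nth (?U - fps_const (2 * x) * (fps_X * ?U) + fps_X ^ 2 * ?U) k = fps_nth 1 k"
      by (cases k rule: chebyshev_U.cases) (simp_all add: fps_X_power_mult_nth algebra_simps)
  qed
  finally show "(1 - fps_const (2 * x) * fps_X + fps_X ^ 2) * ?U = 1" .
qed

lemma gegenbauer2_eq_sum_chebyshev_U:
  "gegenbauer2 n x = (\<Sum>k=0..n. poly (chebyshev_U k) x * poly (chebyshev_U (n - k)) x)"
  unfolding gegenbauer2_def fps_inverse_power inverse_fps_chebyshev_U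
  by (simp add: power2_eq_square fps_mult_nth)

lemma sin_mult_chebyshev_U: "sin t * poly (chebyshev_U k) (cos t) = sin (real (Suc k) * t)"
proof (induction k rule: chebyshev_U.induct)
  case (3 k)
  have "real (Suc (Suc (Suc k))) * t = real (Suc (Suc k)) * t + t"
    and "real (Suc k) * t = real (Suc (Suc k)) * t - t"
    by (simp_all add: algebra_simps)
  then have "sin (real (Suc (Suc (Suc k))) * t) =
      2 * cos t * sin (real (Suc (Suc k)) * t) - sin (real (Suc k) * t)"
    by (simp only: sin_add sin_diff) (simp add: algebra_simps)
  then show ?case
    using 3 by (simp add: algebra_simps)
qed (simp_all add: sin_double)

lemma degree_chebyshev_U_le: "degree (chebyshev_U k) \<le> k"
proof (induction k rule: chebyshev_U.induct)
  case (3 k)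
  have "degree ([:0, 2:] * chebyshev_U (Suc k)) \<le> Suc (Suc k)"
    using degree_mult_le[of "[:0, 2:]" "chebyshev_U (Suc k)"] 3(1) by simp
  then show ?case
    using 3(2) by (simp add: degree_diff_le)
qed simp_all

lemma chebyshev_U_joukowski:
  assumes "t \<noteq> 0"
  shows "t ^ k * poly (chebyshev_U k) ((t + 1 / t) / 2) = (\<Sum>i\<le>k. (t\<^sup>2) ^ i)"
proof (induction k rule: chebyshev_U.induct)
  case (3 k)
  have "t ^ Suc (Suc k) * poly (chebyshev_U (Suc (Suc k))) ((t + 1 / t) / 2)
      = (t\<^sup>2 + 1) * (t ^ Suc k * poly (chebyshev_U (Suc k)) ((t + 1 / t) / 2))
        - t\<^sup>2 * (t ^ k * poly (chebyshev_U k) ((t + 1 / t) / 2))"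
    using assms by (simp add: field_simps power2_eq_square)
  also have "\<dots> = (\<Sum>i\<le>Suc (Suc k). (t\<^sup>2) ^ i)"
    unfolding 3 by (simp add: algebra_simps)
  finally show ?case .
qed (use assms in \<open>simp_all add: field_simps power2_eq_square\<close>)

definition gegenbauer2_poly :: "nat \<Rightarrow> real poly" where
  "gegenbauer2_poly n = (\<Sum>k=0..n. chebyshev_U k * chebyshev_U (n - k))"

lemma poly_gegenbauer2_poly: "poly (gegenbauer2_poly n) x = gegenbauer2 n x"
  by (simp add: gegenbauer2_poly_def gegenbauer2_eq_sum_chebyshev_U poly_sum)

lemma degree_gegenbauer2_poly_le: "degree (gegenbauer2_poly n) \<le> n"
  unfolding gegenbauer2_poly_def
proof (rule degree_sum_le)
  fix k assume "k \<in> {0..n}"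
  then show "degree (chebyshev_U k * chebyshev_U (n - k)) \<le> n"
    using degree_mult_le[of "chebyshev_U k" "chebyshev_U (n - k)"] degree_chebyshev_U_le[of k]
      degree_chebyshev_U_le[of "n - k"] by simp
qed simp

lemma sin_sq_mult_gegenbauer2:
  "(sin t)\<^sup>2 * gegenbauer2 n (cos t) = (\<Sum>k=0..n. sin (real (Suc k) * t) * sin (real (Suc (n - k)) * t))"
  unfolding gegenbauer2_eq_sum_chebyshev_U sum_distrib_left sin_mult_chebyshev_U[symmetric]
  by (simp add: power2_eq_square algebra_simps)

text \<open>At the node \<open>t = k pi / (n + 2)\<close> all summands above equal \<open>(-1)^(k+1) sin((j+1)t)^2\<close>,
  so \<open>C_n^(2)\<close> alternates in sign along the nodes.\<close>
lemma gegenbauer2_sign_at_node: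
  assumes "1 \<le> k" "k \<le> n + 1"
  shows "(-1) ^ (k + 1) * gegenbauer2 n (cos (real k * pi / real (n + 2))) > 0"
proof -
  define t where "t = real k * pi / real (n + 2)"
  have "pi * real k < pi * real (n + 2)"
    using assms by (intro mult_strict_left_mono) auto
  then have "0 < t" "t < pi"
    using assms by (auto simp: t_def field_simps)
  then have "sin t > 0"
    by (intro sin_gt_zero)
  have "sin (real (Suc (n - j)) * t) = (-1) ^ (k + 1) * sin (real (Suc j) * t)" if "j \<le> n" for j
  proof -
    have "real (Suc (n - j)) * t = real k * pi - real (Suc j) * t"
      using that by (simp add: t_def of_nat_diff field_simps)
    then show ?thesis
      by (simp add: sin_diff)
  qed
  then have sum: "(sin t)\<^sup>2 * gegenbauer2 n (cos t) =
      (-1) ^ (k + 1) * (\<Sum>j=0..n. (sin (real (Suc j) * t))\<^sup>2)"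
    unfolding sin_sq_mult_gegenbauer2 sum_distrib_left by (intro sum.cong) (auto simp: power2_eq_square)
  have "(sin t)\<^sup>2 * ((-1) ^ (k + 1) * gegenbauer2 n (cos t)) =
      (-1) ^ (k + 1) * ((sin t)\<^sup>2 * gegenbauer2 n (cos t))"
    by (simp only: mult_ac)
  also have "\<dots> = ((-1) ^ (k + 1) * (-1) ^ (k + 1)) * (\<Sum>j=0..n. (sin (real (Suc j) * t))\<^sup>2)"
    unfolding sum by (simp only: mult.assoc)
  also have "\<dots> = (\<Sum>j=0..n. (sin (real (Suc j) * t))\<^sup>2)"
    by (simp flip: power_mult_distrib)
  also have "\<dots> \<ge> (sin (real (Suc 0) * t))\<^sup>2"
    by (rule member_le_sum) auto
  finally have "(sin (real (Suc 0) * t))\<^sup>2 \<le> (sin t)\<^sup>2 * ((-1) ^ (k + 1) * gegenbauer2 n (cos t))" .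
  moreover have "(sin (real (Suc 0) * t))\<^sup>2 > 0"
    using \<open>sin t > 0\<close> by simp
  ultimately have "(sin t)\<^sup>2 * ((-1) ^ (k + 1) * gegenbauer2 n (cos t)) > 0"
    by linarith
  then have "(-1) ^ (k + 1) * gegenbauer2 n (cos t) > 0"
    by (rule zero_less_mult_pos) (use \<open>sin t > 0\<close> in \<open>simp add: power2_eq_square\<close>)
  then show ?thesis
    by (simp only: t_def)
qed

lemma IVT_strict:
  fixes f :: "real \<Rightarrow> real"
  assumes "a \<le> b" "continuous_on {a..b} f" "f a * f b < 0"
  shows "\<exists>c. a < c \<and> c < b \<and> f c = 0"
proof -
  have "f a < 0 \<and> 0 < f b \<or> f b < 0 \<and> 0 < f a"
    using assms(3) by (auto simp: mult_less_0_iff)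
  then obtain c where "a \<le> c" "c \<le> b" "f c = 0"
    using IVT'[of f a 0 b] IVT2'[of f b 0 a] assms(1,2) by fastforce
  moreover have "c \<noteq> a" "c \<noteq> b"
    using \<open>f c = 0\<close> assms(3) by auto
  ultimately show ?thesis
    by (intro exI[of _ c]) (simp add: less_le)
qed

lemma poly_eq_smult_prod_roots:
  fixes p :: "'a::idom poly" and x :: "'b \<Rightarrow> 'a"
  assumes "finite J" "inj_on x J" "degree p \<le> card J" and root: "\<And>j. j \<in> J \<Longrightarrow> poly p (x j) = 0"
  shows "p = smult (coeff p (card J)) (\<Prod>j\<in>J. [:- x j, 1:])"
proof -
  have deg: "degree (\<Prod>j\<in>J. [:- x j, 1:]) = card J"
    by (simp add: degree_prod_eq_sum_degree)
  show ?thesis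
  proof (rule poly_eqI_degree_lead_coeff[where A="x ` J"])
    show "coeff p (card J) = coeff (smult (coeff p (card J)) (\<Prod>j\<in>J. [:- x j, 1:])) (card J)"
      using deg lead_coeff_prod[of "\<lambda>j. [:- x j, 1:]" J] by simp
    show "card J \<le> card (x ` J)"
      using card_image[OF assms(2)] by simp
    show "degree (smult (coeff p (card J)) (\<Prod>j\<in>J. [:- x j, 1:])) \<le> card J"
      using deg by simp
    fix y assume "y \<in> x ` J"
    then obtain i where "i \<in> J" "y = x i"
      by blast
    then show "poly p y = poly (smult (coeff p (card J)) (\<Prod>j\<in>J. [:- x j, 1:])) y"
      using root assms(1) by (auto simp: poly_prod intro!: prod_zero bexI[of _ i])
  qed fact
qed

lemma gegenbauer2_zero_between_nodes:
  assumes "j \<in> {1..n}"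
  shows "\<exists>z. real j * pi / real (n + 2) < z \<and> z < real (Suc j) * pi / real (n + 2)
    \<and> gegenbauer2 n (cos z) = 0"
proof (rule IVT_strict)
  show "real j * pi / real (n + 2) \<le> real (Suc j) * pi / real (n + 2)"
    by (simp add: divide_right_mono)
  show "continuous_on {real j * pi / real (n + 2)..real (Suc j) * pi / real (n + 2)}
      (\<lambda>z. gegenbauer2 n (cos z))"
    unfolding poly_gegenbauer2_poly[symmetric] by (intro continuous_intros)
  show "gegenbauer2 n (cos (real j * pi / real (n + 2)))
      * gegenbauer2 n (cos (real (Suc j) * pi / real (n + 2))) < 0"
    using gegenbauer2_sign_at_node[of j n] gegenbauer2_sign_at_node[of "Suc j" n] assms
    by (cases "even j") (auto simp: mult_less_0_iff zero_less_mult_iff)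
qed

lemma gegenbauer2_factorization:
  "\<exists>z c. c \<noteq> 0 \<and> (\<forall>j\<in>{1..n}. 0 < z j \<and> z j < pi)
     \<and> (\<forall>y. gegenbauer2 n y = c * (\<Prod>j=1..n. y - cos (z j)))"
proof -
  define node where "node j = real j * pi / real (n + 2)" for j
  obtain z where z: "\<And>j. j \<in> {1..n} \<Longrightarrow>
      node j < z j \<and> z j < node (Suc j) \<and> gegenbauer2 n (cos (z j)) = 0"
    using gegenbauer2_zero_between_nodes[of _ n] unfolding node_def by metis
  have node_mono: "node i \<le> node j" if "i \<le> j" for i j
    using that by (simp add: node_def divide_right_mono)
  have z_range: "0 < z j \<and> z j < pi" if "j \<in> {1..n}" for j
  proof -
    have "0 < node j" "node (Suc j) \<le> pi"
      using that node_mono[of "Suc j" "n + 2"] by (auto simp: node_def)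
    then show ?thesis
      using z[OF that] by auto
  qed
  have "inj_on (\<lambda>j. cos (z j)) {1..n}"
  proof (rule inj_onI)
    fix i j assume i: "i \<in> {1..n}" and j: "j \<in> {1..n}" and "cos (z i) = cos (z j)"
    then have "z i = z j"
      using z_range[OF i] z_range[OF j] by (meson cos_inj_pi less_imp_le)
    show "i = j"
    proof (rule ccontr)
      assume "i \<noteq> j"
      then consider "Suc i \<le> j" | "Suc j \<le> i"
        by linarith
      then have "z i \<noteq> z j"
        using z[OF i] z[OF j] by cases (fastforce dest: node_mono)+
      with \<open>z i = z j\<close> show False
        by simp
    qed
  qed
  define c where "c = coeff (gegenbauer2_poly n) n"
  have eq: "gegenbauer2_poly n = smult c (\<Prod>j=1..n. [:- cos (z j), 1:])"
    using poly_eq_smult_prod_roots[of "{1..n}" "\<lambda>j. cos (z j)" "gegenbauer2_poly n"]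
      \<open>inj_on (\<lambda>j. cos (z j)) {1..n}\<close> degree_gegenbauer2_poly_le[of n] z
    by (simp add: c_def poly_gegenbauer2_poly)
  have fac: "gegenbauer2 n y = c * (\<Prod>j=1..n. y - cos (z j))" for y
    using arg_cong[OF eq, of "\<lambda>r. poly r y"] by (simp add: poly_gegenbauer2_poly poly_prod)
  moreover have "c \<noteq> 0"
    using fac gegenbauer2_sign_at_node[of 1 n] by auto
  ultimately show ?thesis
    using z_range by blast
qed

section \<open>Power sums of the zeros\<close>

definition geom_sum_convolution :: "nat \<Rightarrow> 'a::comm_semiring_1 \<Rightarrow> 'a" where
  "geom_sum_convolution n s = (\<Sum>k=0..n. (\<Sum>i\<le>k. s ^ i) * (\<Sum>i\<le>n - k. s ^ i))"

lemma geom_sum_convolution_zero: "geom_sum_convolution n (0 :: 'a::comm_ring_1) = of_nat (n + 1)"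
  using sum_gp_basic[of "0 :: 'a"] by (simp add: geom_sum_convolution_def)

lemma one_minus_cube_mult_geom_sum_convolution:
  fixes s :: "'a::comm_ring_1"
  shows "(1 - s) ^ 3 * geom_sum_convolution n s =
    of_nat (n + 1) - of_nat (n + 3) * s + of_nat (n + 3) * s ^ (n + 2) - of_nat (n + 1) * s ^ (n + 3)"
proof -
  have "(1 - s)\<^sup>2 * geom_sum_convolution n s =
      (\<Sum>k=0..n. ((1 - s) * (\<Sum>i\<le>k. s ^ i)) * ((1 - s) * (\<Sum>i\<le>n - k. s ^ i)))"
    unfolding geom_sum_convolution_def power2_eq_square sum_distrib_left[of "(1 - s) * (1 - s)"]
    by (simp only: mult_ac)
  also have "\<dots> = (\<Sum>k=0..n. (1 - s ^ Suc k) * (1 - s ^ Suc (n - k)))"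
    by (simp only: sum_gp_basic)
  also have "\<dots> = (\<Sum>k=0..n. 1 + s ^ (n + 2) - s ^ Suc k - s ^ Suc (n - k))"
    by (intro sum.cong refl) (simp add: algebra_simps flip: power_add)
  also have "\<dots> = of_nat (n + 1) * (1 + s ^ (n + 2)) - 2 * (\<Sum>k=0..n. s ^ Suc k)"
  proof -
    have "(\<Sum>k=0..n. s ^ Suc (n - k)) = (\<Sum>k=0..n. s ^ Suc k)"
      by (rule sum.reindex_bij_witness[where i="\<lambda>k. n - k" and j="\<lambda>k. n - k"]) auto
    then show ?thesis
      by (simp add: sum_subtractf sum.distrib algebra_simps)
  qed
  finally have square: "(1 - s)\<^sup>2 * geom_sum_convolution n s =
      of_nat (n + 1) * (1 + s ^ (n + 2)) - 2 * (\<Sum>k=0..n. s ^ Suc k)" .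
  have tail: "(1 - s) * (\<Sum>k=0..n. s ^ Suc k) = s - s ^ (n + 2)"
  proof -
    have "(1 - s) * (\<Sum>k=0..n. s ^ Suc k) = s * ((1 - s) * (\<Sum>k\<le>n. s ^ k))"
      by (simp add: atLeast0AtMost sum_distrib_left mult_ac)
    also have "\<dots> = s - s ^ (n + 2)"
      by (simp only: sum_gp_basic) (simp add: algebra_simps)
    finally show ?thesis .
  qed
  have "(1 - s) ^ 3 * geom_sum_convolution n s = (1 - s) * ((1 - s)\<^sup>2 * geom_sum_convolution n s)"
    by (simp add: power3_eq_cube power2_eq_square)
  also have "\<dots> = (1 - s) * of_nat (n + 1) * (1 + s ^ (n + 2)) - 2 * (s - s ^ (n + 2))"
    unfolding square tail[symmetric] by (simp add: algebra_simps)
  also have "\<dots> = of_nat (n + 1) - of_nat (n + 3) * s + of_nat (n + 3) * s ^ (n + 2)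
      - of_nat (n + 1) * s ^ (n + 3)"
    by (simp add: algebra_simps numeral_3_eq_3)
  finally show ?thesis .
qed

lemma poly_geom_sum_convolution: "poly (geom_sum_convolution n p) t = geom_sum_convolution n (poly p t)"
  by (simp add: geom_sum_convolution_def poly_sum)

lemma fps_of_poly_geom_sum_convolution:
  "fps_of_poly (geom_sum_convolution n p) = geom_sum_convolution n (fps_of_poly p)"
  by (simp add: geom_sum_convolution_def fps_of_poly_sum fps_of_poly_mult fps_of_poly_power)

lemma gegenbauer2_joukowski:
  assumes "t \<noteq> 0"
  shows "t ^ n * gegenbauer2 n ((t + 1 / t) / 2) = geom_sum_convolution n (t\<^sup>2)"
  unfolding gegenbauer2_eq_sum_chebyshev_U geom_sum_convolution_def sum_distrib_left[of "t ^ n"]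
proof (intro sum.cong refl)
  fix k assume "k \<in> {0..n}"
  then have "t ^ n = t ^ k * t ^ (n - k)"
    by (simp flip: power_add)
  then show "t ^ n * (poly (chebyshev_U k) ((t + 1 / t) / 2) * poly (chebyshev_U (n - k)) ((t + 1 / t) / 2))
      = (\<Sum>i\<le>k. (t\<^sup>2) ^ i) * (\<Sum>i\<le>n - k. (t\<^sup>2) ^ i)"
    by (simp add: chebyshev_U_joukowski[OF assms, symmetric] mult_ac)
qed

text \<open>Substituting \<open>y = (t + 1/t) / 2\<close> into the factorization of \<open>C_n^(2)\<close> turns each factor
  \<open>y - cos z\<close> into \<open>(1 - 2 t cos z + t^2) / (2 t)\<close>.\<close>
lemma prod_cos_quadratic_eq_geom_sum_convolution:
  assumes "c \<noteq> 0" and fac: "\<forall>y. gegenbauer2 n y = c * (\<Prod>j=1..n. y - cos (z j))"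
  shows "(\<Prod>j=1..n. [:1, - 2 * cos (z j), 1:]) =
    smult (1 / (real n + 1)) (geom_sum_convolution n [:0, 0, 1:])"
proof -
  define G where "G = (\<Prod>j=1..n. [:1, - 2 * cos (z j), 1:])"
  define P :: "real poly" where "P = geom_sum_convolution n [:0, 0, 1:]"
  define K where "K = 2 ^ n / c"
  have agree: "poly G t = poly (smult K P) t" if "t \<noteq> 0" for t
  proof -
    have "poly G t = (\<Prod>j=1..n. (2 * t) * ((t + 1 / t) / 2 - cos (z j)))"
      unfolding G_def poly_prod using that by (intro prod.cong) (simp_all add: field_simps power2_eq_square)
    also have "\<dots> = K * (t ^ n * gegenbauer2 n ((t + 1 / t) / 2))"
      using fac \<open>c \<noteq> 0\<close> by (simp add: prod.distrib K_def power_mult_distrib)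
    also have "\<dots> = poly (smult K P) t"
      using that by (simp add: gegenbauer2_joukowski P_def poly_geom_sum_convolution power2_eq_square)
    finally show ?thesis .
  qed
  have "G = smult K P"
  proof (rule ccontr)
    assume "G \<noteq> smult K P"
    then have "finite {t. poly (G - smult K P) t = 0}"
      by (intro poly_roots_finite) simp
    moreover have "UNIV - {0} \<subseteq> {t. poly (G - smult K P) t = 0}"
      using agree by auto
    ultimately have "finite (UNIV - {0 :: real})"
      by (rule finite_subset[rotated])
    then show False
      by (simp add: infinite_UNIV_char_0)
  qed
  moreover have "poly G 0 = 1"
    by (simp add: G_def poly_prod)
  moreover have "poly P 0 = real n + 1"
    by (simp add: P_def poly_geom_sum_convolution geom_sum_convolution_zero)
  ultimately have "K * (real n + 1) = 1"
    by (metis poly_smult)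
  then have "K = 1 / (real n + 1)"
    by (simp add: field_simps)
  then show ?thesis
    using \<open>G = smult K P\<close> by (simp add: G_def P_def)
qed

definition cos_quadratic_fps :: "real \<Rightarrow> real fps" where
  "cos_quadratic_fps t = 1 - fps_const (2 * cos t) * fps_X + fps_X ^ 2"

definition cos_series_fps :: "real \<Rightarrow> real fps" where
  "cos_series_fps t = Abs_fps (\<lambda>k. 2 * cos (real (Suc k) * t))"

lemma fps_of_poly_cos_quadratic: "fps_of_poly [:1, - 2 * cos t, 1:] = cos_quadratic_fps t"
  by (rule fps_ext) (simp add: cos_quadratic_fps_def fps_X_power_nth coeff_pCons split: nat.split)

text \<open>Since \<open>1 - 2 cos t X + X^2 = (1 - e^(it) X) (1 - e^(-it) X)\<close>, its logarithmic derivative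
  is \<open>- \<Sum>\<^sub>k (e^(i(k+1)t) + e^(-i(k+1)t)) X^k\<close>.\<close>
lemma fps_deriv_cos_quadratic_fps:
  "fps_deriv (cos_quadratic_fps t) = - (cos_quadratic_fps t * cos_series_fps t)"
proof (rule fps_ext)
  fix k
  have prod: "cos_quadratic_fps t * cos_series_fps t = cos_series_fps t
      - fps_const (2 * cos t) * (fps_X * cos_series_fps t) + fps_X ^ 2 * cos_series_fps t"
    by (simp add: cos_quadratic_fps_def algebra_simps)
  have "2 * cos (real (Suc (Suc (Suc i))) * t) + 2 * cos (real (Suc i) * t) =
      4 * cos t * cos (real (Suc (Suc i)) * t)" for i
  proof -
    have "real (Suc (Suc (Suc i))) * t = real (Suc (Suc i)) * t + t"
      and "real (Suc i) * t = real (Suc (Suc i)) * t - t"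
      by (simp_all add: algebra_simps)
    then show ?thesis
      by (simp only: cos_add cos_diff) (simp add: algebra_simps)
  qed
  moreover have "2 + 2 * cos (2 * t) = 4 * cos t * cos t"
    by (simp add: cos_double_cos power2_eq_square)
  ultimately show "fps_nth (fps_deriv (cos_quadratic_fps t)) k =
      fps_nth (- (cos_quadratic_fps t * cos_series_fps t)) k"
    unfolding prod
    by (cases k rule: chebyshev_U.cases)
      (simp_all add: cos_quadratic_fps_def cos_series_fps_def fps_X_power_mult_nth
        fps_X_power_nth fps_numeral_nth algebra_simps)
qed

lemma fps_deriv_prod_cos_quadratic_fps:
  "fps_deriv (\<Prod>j\<in>A. cos_quadratic_fps (z j)) =
    - ((\<Prod>j\<in>A. cos_quadratic_fps (z j)) * (\<Sum>j\<in>A. cos_series_fps (z j)))"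
proof (induction A rule: infinite_finite_induct)
  case (insert a A)
  then show ?case
    by (simp add: fps_deriv_cos_quadratic_fps algebra_simps)
qed simp_all

text \<open>Below \<open>X^(2n+4)\<close> the series \<open>R\<close> is \<open>(n + 1) (1 - a X^2)\<close> with \<open>a = (n + 3) / (n + 1)\<close>,
  so comparing coefficients gives a first-order recursion along the odd coefficients of \<open>W\<close>.\<close>
lemma odd_coeff_recursion:
  fixes n :: nat and W :: "real fps"
  defines "R \<equiv> fps_const (real n + 1) - fps_const (real n + 3) * fps_X ^ 2
    + fps_const (real n + 3) * fps_X ^ (2 * n + 4) - fps_const (real n + 1) * fps_X ^ (2 * n + 6)"
  assumes eq: "R * W = - ((1 - fps_X ^ 2) * fps_deriv R)"
  shows "(real n + 1) * fps_nth W 1 = 2 * (real n + 3)"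
    and "\<And>i. i \<le> n \<Longrightarrow> (real n + 1) * fps_nth W (2 * i + 3) = (real n + 3) * fps_nth W (2 * i + 1)
           - (if i = 0 then 2 * (real n + 3) else 0) - (if i = n then (2 * real n + 4) * (real n + 3) else 0)"
proof -
  have R_nth: "fps_nth R k = (if k = 0 then real n + 1 else 0) - (if k = 2 then real n + 3 else 0)
      + (if k = 2 * n + 4 then real n + 3 else 0) - (if k = 2 * n + 6 then real n + 1 else 0)" for k
    by (simp add: R_def fps_X_power_nth)
  have rec: "(real n + 1) * fps_nth W k - (if 2 \<le> k then (real n + 3) * fps_nth W (k - 2) else 0)
      = (if 2 \<le> k then real (k - 1) * fps_nth R (k - 1) else 0) - real (k + 1) * fps_nth R (k + 1)"
    if "k < 2 * n + 4" for k
  proof -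
    have "R * W = fps_const (real n + 1) * W - fps_const (real n + 3) * (fps_X ^ 2 * W)
        + fps_X ^ (2 * n + 4) * ((fps_const (real n + 3) - fps_const (real n + 1) * fps_X ^ 2) * W)"
      by (simp add: R_def algebra_simps flip: power_add)
    then have "fps_nth (R * W) k =
        (real n + 1) * fps_nth W k - (if 2 \<le> k then (real n + 3) * fps_nth W (k - 2) else 0)"
      using that by (simp add: fps_X_power_mult_nth)
    moreover have "fps_nth ((1 - fps_X ^ 2) * fps_deriv R) k =
        real (k + 1) * fps_nth R (k + 1) - (if 2 \<le> k then real (k - 1) * fps_nth R (k - 1) else 0)"
      by (simp add: algebra_simps fps_X_power_mult_nth Suc_diff_Suc numeral_2_eq_2)
    ultimately show ?thesis
      using arg_cong[OF eq, of "\<lambda>f. fps_nth f k"] by simp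
  qed
  show "(real n + 1) * fps_nth W 1 = 2 * (real n + 3)"
    using rec[of 1] by (simp add: R_nth)
  fix i assume "i \<le> n"
  then have "2 * i + 3 < 2 * n + 4" "(2::nat) \<le> 2 * i + 3"
    and "2 * i + 3 - 1 = 2 * i + 2" "2 * i + 3 + 1 = 2 * i + 4" "2 * i + 3 - 2 = 2 * i + 1"
    by simp_all
  with rec[of "2 * i + 3"] have "(real n + 1) * fps_nth W (2 * i + 3) - (real n + 3) * fps_nth W (2 * i + 1)
      = real (2 * i + 2) * fps_nth R (2 * i + 2) - real (2 * i + 4) * fps_nth R (2 * i + 4)"
    by (simp only: if_True of_nat_add of_nat_mult)
  then show "(real n + 1) * fps_nth W (2 * i + 3) = (real n + 3) * fps_nth W (2 * i + 1)
      - (if i = 0 then 2 * (real n + 3) else 0) - (if i = n then (2 * real n + 4) * (real n + 3) else 0)"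
    using \<open>i \<le> n\<close> by (auto simp: R_nth algebra_simps)
qed

lemma odd_coeffs_of_log_deriv_solution:
  fixes n i :: nat and W :: "real fps"
  defines "R \<equiv> fps_const (real n + 1) - fps_const (real n + 3) * fps_X ^ 2
    + fps_const (real n + 3) * fps_X ^ (2 * n + 4) - fps_const (real n + 1) * fps_X ^ (2 * n + 6)"
  defines "a \<equiv> (real n + 3) / (real n + 1)"
  assumes eq: "R * W = - ((1 - fps_X ^ 2) * fps_deriv R)" and "i \<le> n + 1"
  shows "fps_nth W (2 * i + 1) =
    2 * a ^ (i + 1) - (if 1 \<le> i then 2 * a ^ i else 0) - (if i = n + 1 then (2 * real n + 4) * a else 0)"
  using \<open>i \<le> n + 1\<close>
proof (induction i)
  case 0
  have "(real n + 1) * fps_nth W 1 = (real n + 1) * (2 * a)"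
    using odd_coeff_recursion(1)[OF eq[unfolded R_def]] by (simp add: a_def)
  then show ?case
    by simp
next
  case (Suc i)
  then have "i \<le> n"
    by simp
  have na: "(real n + 1) * a = real n + 3"
    by (simp add: a_def)
  have IH: "fps_nth W (2 * i + 1) = 2 * a ^ (i + 1) - (if 1 \<le> i then 2 * a ^ i else 0)"
    using Suc.IH \<open>i \<le> n\<close> by simp
  have "(real n + 1) * fps_nth W (2 * i + 3) = (real n + 1) *
      (a * fps_nth W (2 * i + 1) - (if i = 0 then 2 * a else 0) - (if i = n then (2 * real n + 4) * a else 0))"
    using odd_coeff_recursion(2)[OF eq[unfolded R_def] \<open>i \<le> n\<close>] unfolding na[symmetric]
    by (cases "i = 0"; cases "i = n") (simp_all add: algebra_simps)
  also have "\<dots> = (real n + 1) *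
      (2 * a ^ (i + 2) - 2 * a ^ (i + 1) - (if i = n then (2 * real n + 4) * a else 0))"
    unfolding IH by (cases "i = 0") (simp_all add: algebra_simps)
  finally have "fps_nth W (2 * i + 3) =
      2 * a ^ (i + 2) - 2 * a ^ (i + 1) - (if i = n then (2 * real n + 4) * a else 0)"
    by simp
  moreover have "2 * Suc i + 1 = 2 * i + 3" "Suc i + 1 = i + 2" "(Suc i = n + 1) = (i = n)"
    by simp_all
  ultimately show ?case
    by (simp add: numeral_3_eq_3)
qed

lemma fps_deriv_eq_mult_one_minus_X2_cube:
  fixes P Y :: "'a::comm_ring_1 fps"
  assumes "fps_deriv P = - (P * Y)"
  shows "((1 - fps_X ^ 2) ^ 3 * P) * ((1 - fps_X ^ 2) * Y + 6 * fps_X) =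
    - ((1 - fps_X ^ 2) * fps_deriv ((1 - fps_X ^ 2) ^ 3 * P))"
  using assms by (simp add: fps_deriv_power algebra_simps power2_eq_square power3_eq_cube)

lemma fps_deriv_geom_sum_convolution_X2:
  assumes "c \<noteq> 0" and fac: "\<forall>y. gegenbauer2 n y = c * (\<Prod>j=1..n. y - cos (z j))"
  shows "fps_deriv (geom_sum_convolution n (fps_X ^ 2 :: real fps)) =
    - (geom_sum_convolution n (fps_X ^ 2) * (\<Sum>j=1..n. cos_series_fps (z j)))"
proof -
  have X2: "fps_of_poly [:0, 0, 1 :: real:] = fps_X ^ 2"
    by (simp add: fps_of_poly_pCons power2_eq_square)
  have "(\<Prod>j=1..n. cos_quadratic_fps (z j)) = fps_of_poly (\<Prod>j=1..n. [:1, - 2 * cos (z j), 1:])"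
    by (simp only: fps_of_poly_prod fps_of_poly_cos_quadratic)
  also have "\<dots> = fps_const (1 / (real n + 1)) * geom_sum_convolution n (fps_X ^ 2)"
    unfolding prod_cos_quadratic_eq_geom_sum_convolution[OF assms] fps_of_poly_smult
      fps_of_poly_geom_sum_convolution X2 ..
  finally have "geom_sum_convolution n (fps_X ^ 2 :: real fps) =
      fps_const (real n + 1) * (\<Prod>j=1..n. cos_quadratic_fps (z j))"
    by (simp add: mult.assoc[symmetric])
  then show ?thesis
    by (simp add: fps_deriv_prod_cos_quadratic_fps)
qed

lemma odd_coeffs_of_log_deriv_shift:
  fixes n i :: nat and Y :: "real fps"
  defines "R \<equiv> fps_const (real n + 1) - fps_const (real n + 3) * fps_X ^ 2
    + fps_const (real n + 3) * fps_X ^ (2 * n + 4) - fps_const (real n + 1) * fps_X ^ (2 * n + 6)"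
  defines "a \<equiv> (real n + 3) / (real n + 1)"
  assumes eq: "R * ((1 - fps_X ^ 2) * Y + 6 * fps_X) = - ((1 - fps_X ^ 2) * fps_deriv R)"
    and "i \<le> n + 1"
  shows "fps_nth Y (2 * i + 1) = 2 * a ^ (i + 1) - 6 - (if i = n + 1 then (2 * real n + 4) * a else 0)"
proof -
  let ?W = "(1 - fps_X ^ 2) * Y + 6 * fps_X"
  have W_nth: "fps_nth ?W k = fps_nth Y k - (if 2 \<le> k then fps_nth Y (k - 2) else 0)
      + (if k = 1 then 6 else 0)" for k
    by (simp add: left_diff_distrib fps_X_power_mult_nth fps_numeral_nth)
  note W_odd = odd_coeffs_of_log_deriv_solution[OF eq[unfolded R_def], folded a_def]
  show ?thesis
    using \<open>i \<le> n + 1\<close>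
  proof (induction i)
    case 0
    then show ?case
      using W_odd[of 0] W_nth[of 1] by simp
  next
    case (Suc i)
    have "fps_nth ?W (2 * i + 3) = fps_nth Y (2 * i + 3) - fps_nth Y (2 * i + 1)"
      using W_nth[of "2 * i + 3"] by (simp add: numeral_3_eq_3)
    then show ?case
      using W_odd[of "Suc i"] Suc by (simp add: numeral_3_eq_3 algebra_simps)
  qed
qed

lemma sum_cos_mult_gegenbauer2_zeros:
  assumes "c \<noteq> 0" and fac: "\<forall>y. gegenbauer2 n y = c * (\<Prod>j=1..n. y - cos (z j))"
    and "1 \<le> m" "m \<le> n + 2"
  shows "(\<Sum>j=1..n. cos (2 * real m * z j)) = ((real n + 3) / (real n + 1)) ^ m - 3
    - (if m = n + 2 then (real n + 2) * ((real n + 3) / (real n + 1)) else 0)"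
proof -
  define a where "a = (real n + 3) / (real n + 1)"
  define Y where "Y = (\<Sum>j=1..n. cos_series_fps (z j))"
  define R :: "real fps" where "R = (1 - fps_X ^ 2) ^ 3 * geom_sum_convolution n (fps_X ^ 2)"
  have "R * ((1 - fps_X ^ 2) * Y + 6 * fps_X) = - ((1 - fps_X ^ 2) * fps_deriv R)"
    unfolding R_def Y_def
    by (rule fps_deriv_eq_mult_one_minus_X2_cube[OF fps_deriv_geom_sum_convolution_X2[OF assms(1,2)]])
  moreover have "R = fps_const (real n + 1) - fps_const (real n + 3) * fps_X ^ 2
      + fps_const (real n + 3) * fps_X ^ (2 * n + 4) - fps_const (real n + 1) * fps_X ^ (2 * n + 6)"
  proof -
    have "2 * (n + 2) = 2 * n + 4" "2 * (n + 3) = 2 * n + 6"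
      by simp_all
    then have "(fps_X ^ 2 :: real fps) ^ (n + 2) = fps_X ^ (2 * n + 4)"
      and "(fps_X ^ 2 :: real fps) ^ (n + 3) = fps_X ^ (2 * n + 6)"
      by (simp_all only: power_mult[symmetric])
    then show ?thesis
      unfolding R_def one_minus_cube_mult_geom_sum_convolution by (simp add: add.commute flip: fps_of_nat)
  qed
  ultimately have Y_odd: "i \<le> n + 1 \<Longrightarrow> fps_nth Y (2 * i + 1) =
      2 * a ^ (i + 1) - 6 - (if i = n + 1 then (2 * real n + 4) * a else 0)" for i
    using odd_coeffs_of_log_deriv_shift[of n Y i] by (simp add: a_def)
  obtain i where m: "m = i + 1"
    using assms(3) by (intro that[of "m - 1"]) simp
  define S where "S = (\<Sum>j=1..n. cos (2 * real m * z j))"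
  have "2 * S = fps_nth Y (2 * i + 1)"
    by (simp add: S_def m Y_def fps_sum_nth cos_series_fps_def sum_distrib_left algebra_simps)
  also have "\<dots> = 2 * a ^ (i + 1) - 6 - (if i = n + 1 then (2 * real n + 4) * a else 0)"
    using assms(4) by (intro Y_odd) (simp add: m)
  finally have "S = a ^ m - 3 - (if m = n + 2 then (real n + 2) * a else 0)"
    by (cases "i = n + 1") (simp_all add: m algebra_simps)
  then show ?thesis
    by (simp only: S_def a_def)
qed

lemma ln_sq_mult_prod:
  fixes c :: real
  assumes "c \<noteq> 0" "\<And>j. j \<in> J \<Longrightarrow> f j \<noteq> 0"
  shows "ln ((c * (\<Prod>j\<in>J. f j))\<^sup>2) = ln (c\<^sup>2) + (\<Sum>j\<in>J. ln ((f j)\<^sup>2))"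
proof -
  have "ln ((c * (\<Prod>j\<in>J. f j))\<^sup>2) = ln (c\<^sup>2 * (\<Prod>j\<in>J. (f j)\<^sup>2))"
    by (simp add: power_mult_distrib prod_power_distrib)
  also have "\<dots> = ln (c\<^sup>2) + ln (\<Prod>j\<in>J. (f j)\<^sup>2)"
    using assms by (intro ln_mult_pos) (auto intro: prod_pos)
  also have "ln (\<Prod>j\<in>J. (f j)\<^sup>2) = (\<Sum>j\<in>J. ln ((f j)\<^sup>2))"
    using assms by (cases "finite J") (auto intro: ln_prod)
  finally show ?thesis .
qed

lemma has_integral_cos_mult_ln_sq_prod:
  assumes "finite J" "k \<ge> 1" "c \<noteq> 0" and z: "\<And>j. j \<in> J \<Longrightarrow> 0 < z j \<and> z j < pi"
  shows "((\<lambda>t. cos (real k * t) * ln ((c * (\<Prod>j\<in>J. cos t - cos (z j)))\<^sup>2)) has_integral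
           - 2 * pi / real k * (\<Sum>j\<in>J. cos (real k * z j))) {0..pi}"
proof -
  have "((\<lambda>t. cos (real k * t) * ln (c\<^sup>2) + (\<Sum>j\<in>J. cos (real k * t) * ln ((cos t - cos (z j))\<^sup>2)))
      has_integral (0 + (\<Sum>j\<in>J. - 2 * pi * cos (real k * z j) / real k))) {0..pi}"
    using assms by (intro has_integral_add has_integral_cos_nat_mult_const has_integral_sum
        has_integral_cos_mult_ln_sq_cos_diff) auto
  moreover have "0 + (\<Sum>j\<in>J. - 2 * pi * cos (real k * z j) / real k) =
      - 2 * pi / real k * (\<Sum>j\<in>J. cos (real k * z j))"
    by (simp add: sum_distrib_left)
  ultimately have "((\<lambda>t. cos (real k * t) * ln (c\<^sup>2)
      + (\<Sum>j\<in>J. cos (real k * t) * ln ((cos t - cos (z j))\<^sup>2)))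
      has_integral - 2 * pi / real k * (\<Sum>j\<in>J. cos (real k * z j))) {0..pi}"
    by (simp only:)
  then show ?thesis
  proof (rule has_integral_spike_finite[where S="z ` J", rotated -1])
    fix t assume t: "t \<in> {0..pi} - z ` J"
    have "cos t - cos (z j) \<noteq> 0" if "j \<in> J" for j
      using t z[OF that] cos_inj_pi[of t "z j"] that by auto
    then show "cos (real k * t) * ln ((c * (\<Prod>j\<in>J. cos t - cos (z j)))\<^sup>2) =
        cos (real k * t) * ln (c\<^sup>2) + (\<Sum>j\<in>J. cos (real k * t) * ln ((cos t - cos (z j))\<^sup>2))"
      by (simp add: ln_sq_mult_prod \<open>c \<noteq> 0\<close> distrib_left sum_distrib_left)
  qed (simp add: \<open>finite J\<close>)
qed

theorem proposition2:
  fixes n m :: nat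
  assumes "1 \<le> m" and "m \<le> n + 2"
  shows "((\<lambda>\<theta>. cos (2 * real m * \<theta>) * ln ((gegenbauer2 n (cos \<theta>))\<^sup>2)) has_integral
           (pi / real m * (3 - ((real n + 3) / (real n + 1)) ^ m)
            + pi * ((real n + 3) / (real n + 1)) * (if m = n + 2 then 1 else 0))) {0..pi}"
proof -
  obtain z c where "c \<noteq> 0" and z: "\<forall>j\<in>{1..n}. 0 < z j \<and> z j < pi"
    and fac: "\<forall>y. gegenbauer2 n y = c * (\<Prod>j=1..n. y - cos (z j))"
    using gegenbauer2_factorization by blast
  define a where "a = (real n + 3) / (real n + 1)"
  have "((\<lambda>\<theta>. cos (real (2 * m) * \<theta>) * ln ((gegenbauer2 n (cos \<theta>))\<^sup>2)) has_integral
      - 2 * pi / real (2 * m) * (\<Sum>j=1..n. cos (real (2 * m) * z j))) {0..pi}"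
    unfolding fac[rule_format] using assms z \<open>c \<noteq> 0\<close> by (intro has_integral_cos_mult_ln_sq_prod) auto
  also have "(\<Sum>j=1..n. cos (real (2 * m) * z j)) = a ^ m - 3 - (if m = n + 2 then (real n + 2) * a else 0)"
    using sum_cos_mult_gegenbauer2_zeros[OF \<open>c \<noteq> 0\<close> fac assms] by (simp add: a_def)
  also have "- 2 * pi / real (2 * m) * (a ^ m - 3 - (if m = n + 2 then (real n + 2) * a else 0)) =
      pi / real m * (3 - a ^ m) + pi * a * (if m = n + 2 then 1 else 0)"
    using assms(1) by (auto simp: field_simps)
  finally show ?thesis
    by (simp add: a_def)
qed

end
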